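(* Let $X$ and $Y$ be Banach spaces and let $F:X\to Y$ be continuous and Gâteaux-differentiable, with $F(0)=0$. Let $R>0$ and $m>0$, and assume that for every $x\in X$ with $\|x\|\le R$ the derivative $DF(x)$ has a right-inverse $L(x)$ (a bounded linear map $Y\to X$ with $DF(x)L(x)v=v$ for all $v\in Y$) satisfying $\|L(x)\|\le m$. Then for every $\bar y\in Y$ with $\|\bar y\|<R/m$ and every $\mu>m$ there is some $\bar x\in X$ such that $\|\bar x\|<R$, $\|\bar x\|\le\mu\|\bar y\|$, and $F(\bar x)=\bar y$.
   Context: $F$ is Gâteaux-differentiable at $x$ if there is a continuous linear map $DF(x):X\to Y$ such that for every $u\in X$, $\lim_{t\to0}\|(F(x+tu)-F(x))/t-DF(x)u\|=0$. *)

theory Defs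
  imports "HOL-Analysis.Analysis"
begin

definition gateaux_deriv :: "('a::real_normed_vector \<Rightarrow> 'b::real_normed_vector) \<Rightarrow> 'a \<Rightarrow> ('a \<Rightarrow> 'b) \<Rightarrow> bool" where
  "gateaux_deriv F x D \<longleftrightarrow> bounded_linear D \<and>
     (\<forall>u. ((\<lambda>t::real. (F (x + t *\<^sub>R u) - F x) /\<^sub>R t) \<longlongrightarrow> D u) (at 0))"

end

theory Submission
  imports Defs
begin

text \<open>Choose \<open>c \<in> (m, \<mu>]\<close> with \<open>c \<parallel>y\<parallel> < R\<close> and apply Ekeland's variational principle with
  slope \<open>1/c\<close> to the residual \<open>x \<mapsto> \<parallel>F x - y\<parallel>\<close>, starting at \<open>0\<close>. The point \<open>x\<close> it produces
  satisfies \<open>\<parallel>x\<parallel>/c \<le> \<parallel>y\<parallel>\<close>, so it lies inside the ball of radius \<open>R\<close> where the right inverse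
  exists. If \<open>F x \<noteq> y\<close>, moving from \<open>x\<close> in the direction \<open>u = L x (y - F x)\<close> lowers the
  residual at rate \<open>\<parallel>y - F x\<parallel>\<close> while the Ekeland penalty grows only at rate
  \<open>\<parallel>u\<parallel>/c \<le> (m/c) \<parallel>y - F x\<parallel>\<close>, contradicting the minimality of \<open>x\<close>.

  Ekeland's principle is obtained from the nested closed sets
  \<open>{z. f z + a d(z, x\<^sub>n) \<le> f x\<^sub>n}\<close>: choosing \<open>x\<^sub>n\<^sub>+\<^sub>1\<close> as a near-minimizer of \<open>f\<close> on the
  previous set forces their diameters to zero, and their single common point is the answer.\<close>

definition ekeland_set :: "('a::metric_space \<Rightarrow> real) \<Rightarrow> real \<Rightarrow> 'a \<Rightarrow> 'a set" where
  "ekeland_set f a x = {z. f z + a * dist z x \<le> f x}"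

lemma ekeland_set_self [simp]: "x \<in> ekeland_set f a x"
  by (simp add: ekeland_set_def)

lemma ekeland_set_subset:
  assumes "a \<ge> 0" and "z \<in> ekeland_set f a x"
  shows "ekeland_set f a z \<subseteq> ekeland_set f a x"
proof
  fix w assume w: "w \<in> ekeland_set f a z"
  have "a * dist w x \<le> a * dist w z + a * dist z x"
    using assms(1) dist_triangle[of w x z] by (metis distrib_left mult_left_mono)
  then show "w \<in> ekeland_set f a x"
    using w assms(2) by (simp add: ekeland_set_def)
qed

lemma closed_ekeland_set:
  assumes "continuous_on UNIV f"
  shows "closed (ekeland_set f a x)"
  unfolding ekeland_set_def using assms by (intro closed_Collect_le continuous_intros) auto

lemma ekeland_set_dist_le:
  assumes "a \<ge> 0" and "bdd_below (range f)"
    and "x' \<in> ekeland_set f a x" and "f x' \<le> Inf (f ` ekeland_set f a x) + e"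
    and "z \<in> ekeland_set f a x'"
  shows "a * dist z x' \<le> e"
proof -
  have "z \<in> ekeland_set f a x" using ekeland_set_subset assms(1,3,5) by blast
  then have "Inf (f ` ekeland_set f a x) \<le> f z"
    using assms(2) by (intro cInf_lower) (auto intro: bdd_below_mono)
  with assms(4,5) show ?thesis by (simp add: ekeland_set_def)
qed

lemma ekeland_sequence:
  assumes "bdd_below (range f)"
  obtains xs where "xs 0 = x0" and "\<And>n. xs (Suc n) \<in> ekeland_set f a (xs n)"
    and "\<And>n. f (xs (Suc n)) \<le> Inf (f ` ekeland_set f a (xs n)) + 1 / Suc n"
proof -
  define P where "P n x z \<longleftrightarrow> z \<in> ekeland_set f a x \<and> f z \<le> Inf (f ` ekeland_set f a x) + 1 / Suc n"
    for n x z
  have "\<exists>z. P n x z" for n x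
  proof -
    have "\<exists>w \<in> f ` ekeland_set f a x. w < Inf (f ` ekeland_set f a x) + 1 / Suc n"
      by (rule cInf_lessD) (use ekeland_set_self in blast, simp)
    then show ?thesis by (force simp: P_def)
  qed
  then have "P n x (SOME z. P n x z)" for n x by (rule someI_ex)
  then show ?thesis
    by (intro that[of "rec_nat x0 (\<lambda>n x. SOME z. P n x z)"]) (simp_all add: P_def)
qed

theorem ekeland_variational_principle:
  fixes f :: "'a::complete_space \<Rightarrow> real"
  assumes cont: "continuous_on UNIV f" and bdd: "bdd_below (range f)" and a: "a > 0"
  obtains xb where "f xb + a * dist xb x0 \<le> f x0"
    and "\<And>z. z \<noteq> xb \<Longrightarrow> f xb < f z + a * dist z xb"
proof -
  obtain xs where xs0: "xs 0 = x0" and xs_in: "\<And>n. xs (Suc n) \<in> ekeland_set f a (xs n)"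
    and xs_inf: "\<And>n. f (xs (Suc n)) \<le> Inf (f ` ekeland_set f a (xs n)) + 1 / Suc n"
    using ekeland_sequence[OF bdd] by blast
  define S where "S n = ekeland_set f a (xs n)" for n
  have nested: "S n \<subseteq> S m" if "m \<le> n" for m n
    using that
  proof (induction n rule: dec_induct)
    case (step k)
    then show ?case using ekeland_set_subset[OF _ xs_in] a by (force simp: S_def)
  qed simp
  have near: "dist z (xs (Suc n)) \<le> 1 / (a * Suc n)" if "z \<in> S (Suc n)" for z n
  proof -
    have "a * dist z (xs (Suc n)) \<le> 1 / Suc n"
      using ekeland_set_dist_le[OF _ bdd xs_in xs_inf] that a by (simp add: S_def)
    then show ?thesis using a by (simp add: pos_le_divide_eq mult.commute mult.left_commute del: of_nat_Suc)
  qed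
  have shrink: "\<exists>n. \<forall>x\<in>S n. \<forall>y\<in>S n. dist x y < e" if "e > 0" for e
  proof -
    obtain n where n: "inverse (real (Suc n)) < a * e / 2"
      using reals_Archimedean \<open>e > 0\<close> a by (metis half_gt_zero mult_pos_pos)
    have "1 / (a * Suc n) = inverse (Suc n) / a" by (simp add: field_simps)
    also have "\<dots> < e / 2" using n a by (simp add: pos_divide_less_eq mult.commute)
    finally have small: "1 / (a * Suc n) < e / 2" .
    have "dist x y < e" if "x \<in> S (Suc n)" "y \<in> S (Suc n)" for x y
    proof -
      have "dist x y \<le> dist x (xs (Suc n)) + dist y (xs (Suc n))" by (rule dist_triangle2)
      also have "\<dots> \<le> 1 / (a * Suc n) + 1 / (a * Suc n)" using near that by (intro add_mono)
      also have "\<dots> < e" using small by linarith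
      finally show ?thesis .
    qed
    then show ?thesis by blast
  qed
  obtain xb where xb: "\<Inter> (range S) = {xb}"
  proof (rule decreasing_closed_nest_sing[of S, THEN exE])
    show "closed (S n)" for n unfolding S_def by (rule closed_ekeland_set[OF cont])
    show "S n \<noteq> {}" for n unfolding S_def using ekeland_set_self by blast
  qed (use nested shrink in blast)+
  show ?thesis
  proof
    show "f xb + a * dist xb x0 \<le> f x0"
      using xb xs0 by (force simp: S_def ekeland_set_def)
  next
    fix z assume "z \<noteq> xb"
    have "z \<notin> ekeland_set f a xb"
    proof
      assume "z \<in> ekeland_set f a xb"
      moreover have "ekeland_set f a xb \<subseteq> S n" for n
        unfolding S_def using a xb by (intro ekeland_set_subset) (auto simp: S_def)
      ultimately have "z \<in> S n" for n by blast
      then show False using xb \<open>z \<noteq> xb\<close> by blast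
    qed
    then show "f xb < f z + a * dist z xb" by (simp add: ekeland_set_def)
  qed
qed

lemma gateaux_deriv_strict_descent:
  fixes F :: "'a::real_normed_vector \<Rightarrow> 'b::real_normed_vector"
  assumes gat: "gateaux_deriv F x D" and Du: "D u = y - F x" and small: "a * norm u < norm (y - F x)"
  shows "\<exists>z. norm (F z - y) + a * dist z x < norm (F x - y)"
proof -
  define v where "v = y - F x"
  define q where "q t = (F (x + t *\<^sub>R u) - F x) /\<^sub>R t" for t :: real
  have "(q \<longlongrightarrow> v) (at 0)"
    unfolding q_def v_def Du[symmetric] using gat by (simp add: gateaux_deriv_def)
  moreover have "norm v - a * norm u > 0" using small by (simp add: v_def)
  ultimately have "eventually (\<lambda>t. dist (q t) v < norm v - a * norm u) (at 0)"
    by (rule tendstoD)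
  then obtain d where d: "d > 0" "\<And>t. t \<noteq> 0 \<Longrightarrow> dist t 0 < d \<Longrightarrow> dist (q t) v < norm v - a * norm u"
    by (auto simp: eventually_at)
  define t where "t = min (d / 2) 1"
  have t: "0 < t" "t \<le> 1" "t < d" using d by (auto simp: t_def)
  have q_close: "norm (q t - v) < norm v - a * norm u" using d(2)[of t] t by (simp add: dist_norm)
  have "F (x + t *\<^sub>R u) - y = t *\<^sub>R (q t - v) - (1 - t) *\<^sub>R v"
    using t by (simp add: q_def v_def algebra_simps)
  then have "norm (F (x + t *\<^sub>R u) - y) \<le> t * norm (q t - v) + (1 - t) * norm v"
    using t norm_triangle_ineq4[of "t *\<^sub>R (q t - v)" "(1 - t) *\<^sub>R v"] by simp
  also have "\<dots> < t * (norm v - a * norm u) + (1 - t) * norm v"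
    using q_close t by simp
  finally have "norm (F (x + t *\<^sub>R u) - y) + a * dist (x + t *\<^sub>R u) x < norm v"
    using t by (simp add: dist_norm algebra_simps)
  then show ?thesis by (auto simp: v_def norm_minus_commute)
qed

lemma exists_scale_between:
  fixes m \<mu> r R :: real
  assumes "m < \<mu>" and "m * r < R" and "r \<ge> 0"
  obtains c where "m < c" and "c \<le> \<mu>" and "c * r < R"
proof (cases "r = 0")
  case True
  then show ?thesis using assms by (intro that[of \<mu>]) auto
next
  case False
  define c where "c = min \<mu> ((m + R / r) / 2)"
  have "m < R / r" using assms False by (simp add: field_simps)
  then have "m < c" using assms(1) by (simp add: c_def)
  moreover have "c \<le> (m + R / r) / 2" unfolding c_def by (rule min.cobounded2)
  then have "c * r \<le> (m + R / r) / 2 * r" using assms(3) by (rule mult_right_mono)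
  moreover have "(m + R / r) / 2 * r < R" using assms False by (simp add: field_simps)
  ultimately show ?thesis by (intro that[of c]) (simp_all add: c_def)
qed

lemma gateaux_residual_minimizer_is_zero:
  fixes F :: "'a::real_normed_vector \<Rightarrow> 'b::real_normed_vector"
  assumes gat: "gateaux_deriv F x D" and L: "bounded_linear L" and right_inv: "D (L (y - F x)) = y - F x"
    and a: "a \<ge> 0" "a * onorm L < 1"
    and minimal: "\<And>z. norm (F x - y) \<le> norm (F z - y) + a * dist z x"
  shows "F x = y"
proof (rule ccontr)
  assume "F x \<noteq> y"
  have "a * norm (L (y - F x)) \<le> a * (onorm L * norm (y - F x))"
    using onorm[OF L] a(1) by (rule mult_left_mono)
  also have "\<dots> < norm (y - F x)"
    using a(2) \<open>F x \<noteq> y\<close> by (simp add: mult.assoc[symmetric])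
  finally obtain z where "norm (F z - y) + a * dist z x < norm (F x - y)"
    using gateaux_deriv_strict_descent[OF gat right_inv] by blast
  then show False using minimal[of z] by simp
qed

theorem theorem2:
  fixes F :: "'a::banach \<Rightarrow> 'b::banach"
    and DF :: "'a \<Rightarrow> 'a \<Rightarrow> 'b"
    and L :: "'a \<Rightarrow> 'b \<Rightarrow> 'a"
    and R m :: real
  assumes contF: "continuous_on UNIV F"
    and gat: "\<And>x. gateaux_deriv F x (DF x)"
    and F0: "F 0 = 0"
    and Rpos: "R > 0" and mpos: "m > 0"
    and Llin: "\<And>x. norm x \<le> R \<Longrightarrow> bounded_linear (L x)"
    and Lright: "\<And>x v. norm x \<le> R \<Longrightarrow> DF x (L x v) = v"
    and Lnorm: "\<And>x. norm x \<le> R \<Longrightarrow> onorm (L x) \<le> m"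
  shows "\<forall>ybar::'b. norm ybar < R / m \<longrightarrow> (\<forall>\<mu>>m. \<exists>xbar::'a.
           norm xbar < R \<and> norm xbar \<le> \<mu> * norm ybar \<and> F xbar = ybar)"
proof (intro allI impI)
  fix y :: 'b and \<mu> :: real
  assume y: "norm y < R / m" and \<mu>: "\<mu> > m"
  then have "m * norm y < R" using mpos by (simp add: field_simps)
  then obtain c where c: "m < c" "c \<le> \<mu>" "c * norm y < R"
    using exists_scale_between \<mu> norm_ge_zero by blast
  have cont: "continuous_on UNIV (\<lambda>x. norm (F x - y))"
    by (intro continuous_intros contF)
  have bdd: "bdd_below (range (\<lambda>x. norm (F x - y)))"
    by (rule bdd_belowI[of _ 0]) auto
  have "1 / c > 0" using c(1) mpos by simp
  then obtain xb where start: "norm (F xb - y) + 1 / c * dist xb 0 \<le> norm (F 0 - y)"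
    and minimal: "\<And>z. z \<noteq> xb \<Longrightarrow> norm (F xb - y) < norm (F z - y) + 1 / c * dist z xb"
    using ekeland_variational_principle[OF cont bdd] by blast
  have "1 / c * norm xb \<le> norm y"
    using start F0 norm_ge_zero[of "F xb - y"] by (simp del: norm_ge_zero)
  then have "norm xb \<le> c * norm y" using \<open>1 / c > 0\<close> by (simp add: field_simps)
  moreover have "c * norm y \<le> \<mu> * norm y" using c(2) by (simp add: mult_right_mono)
  ultimately have xb_le: "norm xb \<le> \<mu> * norm y" and xb_lt: "norm xb < R"
    using c(3) by linarith+
  have "F xb = y"
  proof (rule gateaux_residual_minimizer_is_zero[OF gat])
    show "bounded_linear (L xb)" and "DF xb (L xb (y - F xb)) = y - F xb"
      using Llin Lright xb_lt by simp_all
    show "1 / c * onorm (L xb) < 1"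
      using Lnorm[of xb] xb_lt c(1) mpos by (simp add: field_simps)
    show "norm (F xb - y) \<le> norm (F z - y) + 1 / c * dist z xb" for z
      using minimal[of z] by (cases "z = xb") auto
  qed (use \<open>1 / c > 0\<close> in simp)
  then show "\<exists>xbar. norm xbar < R \<and> norm xbar \<le> \<mu> * norm y \<and> F xbar = y"
    using xb_le xb_lt by blast
qed

end
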